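(* Let $\Delta$ be a pure $(d-1)$-dimensional simplicial complex on $[n]$, and let $\Gamma$ be the simplicial complex (collection of subsets of $[n]$ closed under taking subsets) with $I(\Delta)=I_\Gamma$. Then $\bar\Delta=\mathrm{skel}_\Gamma(d-1)$.
   Context: $S=K[x_1,\ldots,x_n]$, $x_F=\prod_{i\in F}x_i$. $I(\Delta)$ is the facet ideal, generated by $x_F$ for the facets (maximal faces) $F$ of $\Delta$; $I_\Gamma$ is the Stanley–Reisner ideal, generated by $x_F$ for $F\subseteq[n]$, $F\notin\Gamma$. $\Delta$ is pure if all facets have the same cardinality. $\bar\Delta$ is the simplicial complex whose facets are the $d$-element subsets $F\subseteq[n]$ with $F\notin\Delta$. $\mathrm{skel}_\Gamma(i)$ is the complex whose facets are the $i$-dimensional faces of $\Gamma$ (a face $F$ has dimension $|F|-1$). *)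

theory Defs
  imports "HOL-Library.Poly_Mapping"
begin

type_synonym 'k mpoly = "(nat \<Rightarrow>\<^sub>0 nat) \<Rightarrow>\<^sub>0 'k"

definition polyring :: "nat \<Rightarrow> ('k::field) mpoly set" where
  "polyring n = {p. \<forall>m \<in> Poly_Mapping.keys p. Poly_Mapping.keys m \<subseteq> {1..n}}"

definition var :: "nat \<Rightarrow> ('k::field) mpoly" where
  "var i = Poly_Mapping.single (Poly_Mapping.single i 1) 1"

definition xmon :: "nat set \<Rightarrow> ('k::field) mpoly" where
  "xmon F = (\<Prod>i\<in>F. var i)"

definition ideal_gen :: "('k::field) mpoly set \<Rightarrow> 'k mpoly set \<Rightarrow> 'k mpoly set" where
  "ideal_gen R G = {p. \<exists>T r. finite T \<and> T \<subseteq> G \<and> (\<forall>g\<in>T. r g \<in> R) \<and> p = (\<Sum>g\<in>T. r g * g)}"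

definition simplicial_complex :: "nat \<Rightarrow> nat set set \<Rightarrow> bool" where
  "simplicial_complex n \<Delta> \<longleftrightarrow> (\<forall>F\<in>\<Delta>. F \<subseteq> {1..n}) \<and> (\<forall>F\<in>\<Delta>. \<forall>G. G \<subseteq> F \<longrightarrow> G \<in> \<Delta>)"

definition facets :: "nat set set \<Rightarrow> nat set set" where
  "facets \<Delta> = {F\<in>\<Delta>. \<forall>G\<in>\<Delta>. F \<subseteq> G \<longrightarrow> G = F}"

text \<open>Pure of dimension d-1: nonempty and every facet has exactly d elements.\<close>
definition pure_dim :: "nat set set \<Rightarrow> nat \<Rightarrow> bool" where
  "pure_dim \<Delta> d \<longleftrightarrow> \<Delta> \<noteq> {} \<and> (\<forall>F\<in>facets \<Delta>. card F = d)"

definition facet_ideal :: "nat \<Rightarrow> nat set set \<Rightarrow> ('k::field) mpoly set" where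
  "facet_ideal n \<Delta> = ideal_gen (polyring n) (xmon ` facets \<Delta>)"

definition SR_ideal :: "nat \<Rightarrow> nat set set \<Rightarrow> ('k::field) mpoly set" where
  "SR_ideal n \<Gamma> = ideal_gen (polyring n) (xmon ` {F. F \<subseteq> {1..n} \<and> F \<notin> \<Gamma>})"

definition complex_gen :: "nat set set \<Rightarrow> nat set set" where
  "complex_gen X = {G. \<exists>F\<in>X. G \<subseteq> F}"

definition complement_complex :: "nat \<Rightarrow> nat \<Rightarrow> nat set set \<Rightarrow> nat set set" where
  "complement_complex n d \<Delta> = complex_gen {F. F \<subseteq> {1..n} \<and> card F = d \<and> F \<notin> \<Delta>}"

definition skel :: "nat set set \<Rightarrow> int \<Rightarrow> nat set set" where
  "skel \<Gamma> i = complex_gen {F\<in>\<Gamma>. int (card F) - 1 = i}"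

end

theory Submission
  imports Defs
begin

text \<open>A squarefree monomial \<open>x\<^sub>G\<close> lies in the ideal generated by monomials \<open>x\<^sub>F\<close>, \<open>F \<in> S\<close>,
  exactly when some \<open>F \<in> S\<close> is contained in \<open>G\<close>: comparing coefficients of \<open>x\<^sub>G\<close> in a
  combination \<open>\<Sum> r\<^sub>F x\<^sub>F\<close> shows that some \<open>x\<^sub>F\<close> divides \<open>x\<^sub>G\<close>. Applied to both ideals, the
  hypothesis \<open>I(\<Delta>) = I\<^sub>\<Gamma>\<close> says that a subset of \<open>[n]\<close> is a nonface of \<open>\<Gamma>\<close> iff it contains a
  facet of \<open>\<Delta>\<close>. For a \<open>d\<close>-set purity turns "contains a facet" into "is a face of \<open>\<Delta>\<close>",
  so the \<open>d\<close>-sets not in \<open>\<Delta>\<close> are exactly the \<open>d\<close>-sets of \<open>\<Gamma>\<close>.\<close>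

definition indicator_exp :: "nat set \<Rightarrow> (nat \<Rightarrow>\<^sub>0 nat)" where
  "indicator_exp G = (\<Sum>i\<in>G. Poly_Mapping.single i 1)"

lemma lookup_indicator_exp:
  assumes "finite G"
  shows "Poly_Mapping.lookup (indicator_exp G) j = (if j \<in> G then 1 else 0)"
proof -
  have "Poly_Mapping.lookup (indicator_exp G) j
      = (\<Sum>i\<in>G. Poly_Mapping.lookup (Poly_Mapping.single i (1::nat)) j)"
    unfolding indicator_exp_def by (rule lookup_sum)
  also have "\<dots> = (\<Sum>i\<in>G. if i = j then 1 else 0)"
    by (intro sum.cong) (auto simp: lookup_single when_def)
  finally show ?thesis
    using assms by simp
qed

lemma keys_indicator_exp: "finite G \<Longrightarrow> Poly_Mapping.keys (indicator_exp G) = G"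
  by (auto simp: in_keys_iff lookup_indicator_exp split: if_splits)

lemma indicator_exp_le_iff:
  assumes "finite F" "finite G"
  shows "(\<exists>a. indicator_exp G = a + indicator_exp F) \<longleftrightarrow> F \<subseteq> G"
proof
  assume "\<exists>a. indicator_exp G = a + indicator_exp F"
  then obtain a where a: "indicator_exp G = a + indicator_exp F" ..
  show "F \<subseteq> G"
  proof
    fix i assume "i \<in> F"
    have "Poly_Mapping.lookup (indicator_exp G) i
        = Poly_Mapping.lookup a i + Poly_Mapping.lookup (indicator_exp F) i"
      by (simp add: a lookup_add)
    with \<open>i \<in> F\<close> assms show "i \<in> G"
      by (simp add: lookup_indicator_exp split: if_splits)
  qed
next
  assume "F \<subseteq> G"
  then have "indicator_exp G = indicator_exp (G - F) + indicator_exp F"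
    unfolding indicator_exp_def
    using sum.subset_diff[OF \<open>F \<subseteq> G\<close> \<open>finite G\<close>] by simp
  then show "\<exists>a. indicator_exp G = a + indicator_exp F" ..
qed

lemma xmon_eq_single:
  "finite G \<Longrightarrow> (xmon G :: 'k::field mpoly) = Poly_Mapping.single (indicator_exp G) 1"
proof (induction G rule: finite_induct)
  case empty
  then show ?case
    by (simp add: xmon_def indicator_exp_def one_poly_mapping.abs_eq single.abs_eq)
next
  case (insert x F)
  then show ?case
    by (simp add: xmon_def indicator_exp_def var_def mult_single)
qed

lemma xmon_in_polyring: "G \<subseteq> {1..n} \<Longrightarrow> xmon G \<in> polyring n"
  using finite_subset[of G "{1..n}"]
  by (auto simp: polyring_def xmon_eq_single keys_indicator_exp)

lemma xmon_in_ideal_gen_imp_subset: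
  assumes "finite G" "\<forall>F\<in>S. finite F"
    and "(xmon G :: 'k::field mpoly) \<in> ideal_gen R (xmon ` S)"
  shows "\<exists>F\<in>S. F \<subseteq> G"
proof -
  obtain T r where T: "finite T" "T \<subseteq> xmon ` S" "(xmon G :: 'k mpoly) = (\<Sum>g\<in>T. r g * g)"
    using assms(3) unfolding ideal_gen_def by blast
  have "Poly_Mapping.lookup (xmon G :: 'k mpoly) (indicator_exp G) = 1"
    using assms(1) by (simp add: xmon_eq_single)
  then have "(\<Sum>g\<in>T. Poly_Mapping.lookup (r g * g) (indicator_exp G)) \<noteq> 0"
    using T(3) by (simp add: lookup_sum)
  then obtain g where g: "g \<in> T" "indicator_exp G \<in> Poly_Mapping.keys (r g * g)"
    by (meson in_keys_iff sum.neutral)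
  obtain F where F: "F \<in> S" "g = xmon F"
    using g(1) T(2) by blast
  have "finite F"
    using F(1) assms(2) by blast
  from g(2) obtain a b where "indicator_exp G = a + b" "b \<in> Poly_Mapping.keys g"
    using keys_mult by blast
  with F(2) \<open>finite F\<close> have "indicator_exp G = a + indicator_exp F"
    by (simp add: xmon_eq_single)
  with \<open>finite F\<close> assms(1) have "F \<subseteq> G"
    using indicator_exp_le_iff by blast
  with F(1) show ?thesis ..
qed

lemma xmon_in_ideal_gen_iff:
  assumes "G \<subseteq> {1..n}" "\<forall>F\<in>S. finite F"
  shows "(xmon G :: 'k::field mpoly) \<in> ideal_gen (polyring n) (xmon ` S) \<longleftrightarrow> (\<exists>F\<in>S. F \<subseteq> G)"
proof
  assume "(xmon G :: 'k mpoly) \<in> ideal_gen (polyring n) (xmon ` S)"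
  moreover have "finite G"
    using assms(1) by (rule finite_subset) simp
  ultimately show "\<exists>F\<in>S. F \<subseteq> G"
    using assms(2) xmon_in_ideal_gen_imp_subset by blast
next
  assume "\<exists>F\<in>S. F \<subseteq> G"
  then obtain F where F: "F \<in> S" "F \<subseteq> G" ..
  have "(xmon G :: 'k mpoly) = xmon (G - F) * xmon F"
    unfolding xmon_def using prod.subset_diff[OF F(2)] finite_subset[OF assms(1)] by simp
  moreover have "(xmon (G - F) :: 'k mpoly) \<in> polyring n"
    using assms(1) by (intro xmon_in_polyring) blast
  ultimately show "(xmon G :: 'k mpoly) \<in> ideal_gen (polyring n) (xmon ` S)"
    unfolding ideal_gen_def using F(1)
    by (intro CollectI exI[of _ "{xmon F}"] exI[of _ "\<lambda>_. xmon (G - F)"]) auto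
qed

lemma simplicial_complex_finite_faces:
  "simplicial_complex n \<Delta> \<Longrightarrow> F \<in> \<Delta> \<Longrightarrow> finite F"
  unfolding simplicial_complex_def by (meson finite_atLeastAtMost finite_subset)

lemma simplicial_complex_finite:
  assumes "simplicial_complex n \<Delta>"
  shows "finite \<Delta>"
proof (rule finite_subset)
  show "\<Delta> \<subseteq> Pow {1..n}"
    using assms by (auto simp: simplicial_complex_def)
qed simp

lemma xmon_in_facet_ideal_iff:
  assumes "simplicial_complex n \<Delta>" "G \<subseteq> {1..n}"
  shows "(xmon G :: 'k::field mpoly) \<in> facet_ideal n \<Delta> \<longleftrightarrow> (\<exists>F\<in>facets \<Delta>. F \<subseteq> G)"
proof -
  have "\<forall>F\<in>facets \<Delta>. finite F"
    using simplicial_complex_finite_faces[OF assms(1)] by (simp add: facets_def)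
  then show ?thesis
    unfolding facet_ideal_def by (rule xmon_in_ideal_gen_iff[OF assms(2)])
qed

lemma xmon_in_SR_ideal_iff:
  assumes "simplicial_complex n \<Gamma>" "G \<subseteq> {1..n}"
  shows "(xmon G :: 'k::field mpoly) \<in> SR_ideal n \<Gamma> \<longleftrightarrow> G \<notin> \<Gamma>"
proof -
  have "(xmon G :: 'k mpoly) \<in> SR_ideal n \<Gamma> \<longleftrightarrow> (\<exists>F. F \<subseteq> {1..n} \<and> F \<notin> \<Gamma> \<and> F \<subseteq> G)"
    unfolding SR_ideal_def using assms(2)
    by (subst xmon_in_ideal_gen_iff) (auto intro: finite_subset[OF _ finite_atLeastAtMost])
  also have "\<dots> \<longleftrightarrow> G \<notin> \<Gamma>"
    using assms unfolding simplicial_complex_def by blast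
  finally show ?thesis .
qed

lemma facet_containing_face:
  assumes "finite \<Delta>" "F \<in> \<Delta>"
  shows "\<exists>E\<in>facets \<Delta>. F \<subseteq> E"
proof -
  obtain E where E: "E \<in> \<Delta>" "F \<subseteq> E" "\<forall>G\<in>\<Delta>. E \<subseteq> G \<longrightarrow> E = G"
    using finite_has_maximal2[OF assms] by (elim bexE conjE)
  then have "E \<in> facets \<Delta>"
    unfolding facets_def by auto
  with E(2) show ?thesis ..
qed

lemma pure_dim_mem_iff_contains_facet:
  assumes "simplicial_complex n \<Delta>" "pure_dim \<Delta> d" "finite F" "card F = d"
  shows "F \<in> \<Delta> \<longleftrightarrow> (\<exists>E\<in>facets \<Delta>. E \<subseteq> F)"
proof
  assume "F \<in> \<Delta>"
  then obtain E where E: "E \<in> facets \<Delta>" "F \<subseteq> E"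
    using facet_containing_face simplicial_complex_finite[OF assms(1)] by blast
  have "finite E" "card E = d"
    using E(1) assms(1,2) simplicial_complex_finite_faces
    by (auto simp: facets_def pure_dim_def)
  with E(2) assms(4) have "E = F"
    by (metis card_subset_eq)
  with E(1) show "\<exists>E\<in>facets \<Delta>. E \<subseteq> F" by blast
next
  assume "\<exists>E\<in>facets \<Delta>. E \<subseteq> F"
  then obtain E where E: "E \<in> facets \<Delta>" "E \<subseteq> F" ..
  have "card E = d"
    using E(1) assms(2) by (simp add: pure_dim_def)
  with E(2) assms(3,4) have "E = F"
    by (metis card_subset_eq)
  with E(1) show "F \<in> \<Delta>"
    by (simp add: facets_def)
qed

theorem lemma1p1:
  fixes n d :: nat and \<Delta> \<Gamma> :: "nat set set"
  assumes "simplicial_complex n \<Delta>"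
    and "pure_dim \<Delta> d"
    and "simplicial_complex n \<Gamma>"
    and "(facet_ideal n \<Delta> :: 'k::field mpoly set) = SR_ideal n \<Gamma>"
  shows "complement_complex n d \<Delta> = skel \<Gamma> (int d - 1)"
proof -
  have nonface_iff: "G \<notin> \<Gamma> \<longleftrightarrow> (\<exists>F\<in>facets \<Delta>. F \<subseteq> G)" if "G \<subseteq> {1..n}" for G
    using xmon_in_facet_ideal_iff[OF assms(1) that, where 'k='k]
      xmon_in_SR_ideal_iff[OF assms(3) that, where 'k='k] assms(4)
    by simp
  have "F \<notin> \<Delta> \<longleftrightarrow> F \<in> \<Gamma>" if "F \<subseteq> {1..n}" "card F = d" for F
  proof -
    have "finite F"
      using that(1) by (rule finite_subset) simp
    then show ?thesis
      using nonface_iff[OF that(1)] pure_dim_mem_iff_contains_facet[OF assms(1,2) _ that(2)]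
      by blast
  qed
  moreover have "F \<subseteq> {1..n}" if "F \<in> \<Gamma>" for F
    using assms(3) that by (simp add: simplicial_complex_def)
  ultimately have "{F. F \<subseteq> {1..n} \<and> card F = d \<and> F \<notin> \<Delta>} = {F\<in>\<Gamma>. int (card F) - 1 = int d - 1}"
    by auto
  then show ?thesis
    by (simp add: complement_complex_def skel_def)
qed

end
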